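(* Let $\Theta\sim U[0,1]$ and let $T^{3,2,\Theta}$ be the random policy with $T^{3,2,\Theta}_i=\mathcal{R}_{3,2,\Theta}(T_i^* )$ for $i\in[n]$. Then $T^{3,2,\Theta}$ is resource-feasible with probability 1 and $\mathbb{E}_\Theta[F(T^{3,2,\Theta})]\le\frac{2(\sqrt3-1)}{\ln 3}\cdot\mathrm{OPT}(P)$.
   Context: An instance consists of integers $n\ge 1$, $D\ge 1$; a joint ordering cost $K_0>0$; for each commodity $i\in[n]$ an ordering cost $K_i>0$ and a holding coefficient $H_i>0$; and resource coefficients $\alpha_{id}\ge 0$. A policy is $T=(T_1,\dots,T_n)\in\mathbb{R}_{>0}^n$; it is resource-feasible if $\sum_{i}\alpha_{id}/T_i\le 1$ for every $d\in[D]$. For $g>0$, $\Delta\ge 0$, $\mathcal{M}_{g,\Delta}=\{0,g,\dots,\lfloor\Delta/g\rfloor g\}$; $N(T,\Delta)=|\bigcup_{i}\mathcal{M}_{T_i,\Delta}|$; $J(T)=K_0\limsup_{\Delta\to\infty}N(T,\Delta)/\Delta$; $F(T)=J(T)+\sum_i(K_i/T_i+H_iT_i)$. The convex relaxation (P) is: minimize $K_0/T_{\min}+\sum_{i\in[n]}(K_i/T_i+H_iT_i)$ over $(T_{\min},T_1,\dots,T_n)$ subject to $T_i\ge T_{\min}\ge0$ for all $i$ and $\sum_i\alpha_{id}/T_i\le1$ for all $d$. $\mathrm{OPT}(P)$ is its optimal value and $T^*=(T^*_{\min},T^*_1,\dots,T^*_n)$ is a fixed optimal solution (with $T^*_{\min}>0$).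 For integers $m\ge2$, $k\ge1$ and $\theta\in[0,1]$: $\mathcal{G}_{m,k,\theta}=\{m^{(p+\theta)/k}T^*_{\min}:p\in\mathbb{Z}\}$ and $\mathcal{R}_{m,k,\theta}(t)=\min\{g\in\mathcal{G}_{m,k,\theta}:g>t\}$ for $t>0$. *)

theory Defs
  imports "HOL-Analysis.Analysis"
begin

text \<open>Commodities are indexed by i < n, resources by d < D.
  A policy is a function T :: nat \<Rightarrow> real; only its values at i < n matter.\<close>

definition resource_feasible :: "nat \<Rightarrow> nat \<Rightarrow> (nat \<Rightarrow> nat \<Rightarrow> real) \<Rightarrow> (nat \<Rightarrow> real) \<Rightarrow> bool" where
  "resource_feasible n D \<alpha> T \<longleftrightarrow> (\<forall>d<D. (\<Sum>i<n. \<alpha> i d / T i) \<le> 1)"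

definition mult_set :: "real \<Rightarrow> real \<Rightarrow> real set" where
  "mult_set g \<Delta> = (\<lambda>k::nat. real k * g) ` {0..nat \<lfloor>\<Delta> / g\<rfloor>}"

definition Ncount :: "nat \<Rightarrow> (nat \<Rightarrow> real) \<Rightarrow> real \<Rightarrow> nat" where
  "Ncount n T \<Delta> = card (\<Union>i\<in>{..<n}. mult_set (T i) \<Delta>)"

definition Jcost :: "nat \<Rightarrow> real \<Rightarrow> (nat \<Rightarrow> real) \<Rightarrow> ereal" where
  "Jcost n K0 T = ereal K0 * Limsup at_top (\<lambda>\<Delta>::real. ereal (real (Ncount n T \<Delta>) / \<Delta>))"

definition Fcost :: "nat \<Rightarrow> real \<Rightarrow> (nat \<Rightarrow> real) \<Rightarrow> (nat \<Rightarrow> real) \<Rightarrow> (nat \<Rightarrow> real) \<Rightarrow> ereal" where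
  "Fcost n K0 K H T = Jcost n K0 T + ereal (\<Sum>i<n. K i / T i + H i * T i)"

text \<open>Convex relaxation (P). Since the objective contains K0/Tmin with K0 > 0 (and K_i/T_i),
  points with Tmin = 0 have infinite objective; we restrict to Tmin > 0 (which forces T_i > 0).\<close>
definition P_obj :: "nat \<Rightarrow> real \<Rightarrow> (nat \<Rightarrow> real) \<Rightarrow> (nat \<Rightarrow> real) \<Rightarrow> real \<Rightarrow> (nat \<Rightarrow> real) \<Rightarrow> real" where
  "P_obj n K0 K H Tmin T = K0 / Tmin + (\<Sum>i<n. K i / T i + H i * T i)"

definition P_feasible :: "nat \<Rightarrow> nat \<Rightarrow> (nat \<Rightarrow> nat \<Rightarrow> real) \<Rightarrow> real \<Rightarrow> (nat \<Rightarrow> real) \<Rightarrow> bool" where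
  "P_feasible n D \<alpha> Tmin T \<longleftrightarrow> 0 < Tmin \<and> (\<forall>i<n. Tmin \<le> T i) \<and> resource_feasible n D \<alpha> T"

definition OPT_P :: "nat \<Rightarrow> nat \<Rightarrow> real \<Rightarrow> (nat \<Rightarrow> real) \<Rightarrow> (nat \<Rightarrow> real) \<Rightarrow> (nat \<Rightarrow> nat \<Rightarrow> real) \<Rightarrow> real" where
  "OPT_P n D K0 K H \<alpha> = Inf {P_obj n K0 K H Tmin T | Tmin T. P_feasible n D \<alpha> Tmin T}"

definition P_optimal :: "nat \<Rightarrow> nat \<Rightarrow> real \<Rightarrow> (nat \<Rightarrow> real) \<Rightarrow> (nat \<Rightarrow> real) \<Rightarrow> (nat \<Rightarrow> nat \<Rightarrow> real) \<Rightarrow> real \<Rightarrow> (nat \<Rightarrow> real) \<Rightarrow> bool" where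
  "P_optimal n D K0 K H \<alpha> Tmin T \<longleftrightarrow> P_feasible n D \<alpha> Tmin T \<and>
     (\<forall>Tmin' T'. P_feasible n D \<alpha> Tmin' T' \<longrightarrow> P_obj n K0 K H Tmin T \<le> P_obj n K0 K H Tmin' T')"

definition grid :: "nat \<Rightarrow> nat \<Rightarrow> real \<Rightarrow> real \<Rightarrow> real set" where
  "grid m k \<theta> Tmin = {real m powr ((real_of_int p + \<theta>) / real k) * Tmin | p::int. True}"

definition round_up :: "nat \<Rightarrow> nat \<Rightarrow> real \<Rightarrow> real \<Rightarrow> real \<Rightarrow> real" where
  "round_up m k \<theta> Tmin t = (LEAST g. g \<in> grid m k \<theta> Tmin \<and> g > t)"

end

theory Submission
  imports Defs
begin

(* Put c = k log_m (t / T_min).  Rounding t up to the grid G_{m,k,theta} multiplies it by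
  m^((1 - frac (c - theta)) / k) > 1, so order costs and resource loads only decrease; and as
  theta runs uniformly through [0,1], so does 1 - frac (c - theta), whence the expected rounded
  period is t (m^(1/k) - 1) / (ln m / k).  All rounded periods are grid points above
  r = R(T_min) >= T_min m^(theta/k), i.e. integer multiples of one of the k numbers m^(j/k) r,
  so counting joint orders gives J <= K0 (sum_{j<k} m^(-j/k)) / r, with expectation at most
  (1 - 1/m) / (ln m / k) K0 / T_min.  For m = 3, k = 2 both factors are at most
  2 (sqrt 3 - 1) / ln 3 >= 1, and comparing term by term with the objective of (P) at its
  optimum T* gives the bound. *)

lemma round_up_eq:
  fixes \<theta> :: real
  assumes "m \<ge> 2" "k \<ge> 1" "Tm > 0" "t > 0"
  shows "round_up m k \<theta> Tm t
    = real m powr ((\<lfloor>k * log m (t / Tm) - \<theta>\<rfloor> + 1 + \<theta>) / k) * Tm"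
proof -
  define c where "c = k * log m (t / Tm)"
  define p0 where "p0 = \<lfloor>c - \<theta>\<rfloor> + 1"
  have t_eq: "t = real m powr (c / k) * Tm"
    using assms by (simp add: c_def)
  have above_iff: "t < real m powr ((p + \<theta>) / k) * Tm \<longleftrightarrow> p0 \<le> p" for p :: int
  proof -
    have "t < real m powr ((p + \<theta>) / k) * Tm \<longleftrightarrow> c / k < (p + \<theta>) / k"
      using assms by (simp add: t_eq)
    also have "\<dots> \<longleftrightarrow> c < p + \<theta>"
      using assms by (simp add: divide_less_cancel)
    also have "\<dots> \<longleftrightarrow> p0 \<le> p"
      unfolding p0_def by linarith
    finally show ?thesis .
  qed
  show ?thesis
    unfolding round_up_def grid_def c_def[symmetric] p0_def[symmetric]
  proof (rule Least_equality)
    show "real m powr ((p0 + \<theta>) / k) * Tm \<in> {real m powr ((p + \<theta>) / k) * Tm |p::int. True} \<and>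
        t < real m powr ((p0 + \<theta>) / k) * Tm"
      using above_iff by auto
  next
    fix y assume "y \<in> {real m powr ((p + \<theta>) / k) * Tm |p::int. True} \<and> t < y"
    then obtain p :: int where "y = real m powr ((p + \<theta>) / k) * Tm" and "p0 \<le> p"
      using above_iff by auto
    then show "real m powr ((p0 + \<theta>) / k) * Tm \<le> y"
      using assms by (simp add: divide_right_mono)
  qed
qed

lemma round_up_eq_frac:
  fixes \<theta> :: real
  assumes "m \<ge> 2" "k \<ge> 1" "Tm > 0" "t > 0"
  shows "round_up m k \<theta> Tm t = t * real m powr ((1 - frac (k * log m (t / Tm) - \<theta>)) / k)"
proof -
  define c where "c = k * log m (t / Tm)"
  have "(\<lfloor>c - \<theta>\<rfloor> + 1 + \<theta>) / k = c / k + (1 - frac (c - \<theta>)) / k"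
    by (simp add: frac_def add_divide_distrib diff_divide_distrib)
  then have "round_up m k \<theta> Tm t = real m powr (c / k) * Tm * real m powr ((1 - frac (c - \<theta>)) / k)"
    using assms by (simp add: round_up_eq c_def powr_add)
  also have "real m powr (c / k) * Tm = t"
    using assms by (simp add: c_def)
  finally show ?thesis by (simp add: c_def)
qed

lemma round_up_gt:
  assumes "m \<ge> 2" "k \<ge> 1" "Tm > 0" "t > 0"
  shows "t < round_up m k \<theta> Tm t"
proof -
  have "0 < (1 - frac (k * log m (t / Tm) - \<theta>)) / k"
    using assms frac_lt_1 by (intro divide_pos_pos) auto
  then show ?thesis
    using assms by (simp add: round_up_eq_frac)
qed

lemma round_up_self_ge:
  assumes "m \<ge> 2" "k \<ge> 1" "Tm > 0" "\<theta> \<le> 1"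
  shows "Tm * real m powr (\<theta> / k) \<le> round_up m k \<theta> Tm Tm"
proof -
  have "-1 \<le> \<lfloor>- \<theta>\<rfloor>"
    using assms by (simp add: le_floor_iff)
  then have "frac (- \<theta>) \<le> 1 - \<theta>"
    by (simp add: frac_def)
  then have "\<theta> / k \<le> (1 - frac (- \<theta>)) / k"
    by (simp add: divide_right_mono)
  then show ?thesis
    using assms by (simp add: round_up_eq_frac)
qed

lemma round_up_multiple:
  assumes "m \<ge> 2" "k \<ge> 1" "Tm > 0" "Tm \<le> t"
  obtains j N :: nat where "j < k" "N > 0"
    "round_up m k \<theta> Tm t = real N * (real m powr (j / k) * round_up m k \<theta> Tm Tm)"
proof -
  define p where "p = \<lfloor>k * log m (t / Tm) - \<theta>\<rfloor> + 1"
  define p0 where "p0 = \<lfloor>- \<theta>\<rfloor> + 1"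
  have "0 \<le> log m (t / Tm)"
    using assms by simp
  then have "p0 \<le> p"
    unfolding p_def p0_def by (intro add_right_mono floor_mono) simp
  then obtain d :: nat where d: "p = p0 + int d"
    using zle_iff_zadd by blast
  have "real d = real (d div k) * k + real (d mod k)"
    by (metis of_nat_add of_nat_mult div_mult_mod_eq)
  then have "real d / k = real (d mod k) / k + real (d div k)"
    using assms by (simp add: field_simps)
  then have "real m powr (real d / k) = real (m ^ (d div k)) * real m powr (real (d mod k) / k)"
    using assms by (simp add: powr_add powr_realpow)
  moreover have "round_up m k \<theta> Tm t = real m powr (real d / k) * round_up m k \<theta> Tm Tm"
  proof -
    have "(p + \<theta>) / k = real d / k + (p0 + \<theta>) / k"
      by (simp add: d add_divide_distrib)
    moreover have "round_up m k \<theta> Tm t = real m powr ((p + \<theta>) / k) * Tm"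
      using assms by (simp add: round_up_eq p_def)
    moreover have "round_up m k \<theta> Tm Tm = real m powr ((p0 + \<theta>) / k) * Tm"
      using assms by (simp add: round_up_eq p0_def)
    ultimately show ?thesis
      by (simp add: powr_add)
  qed
  ultimately show ?thesis
    using assms by (intro that[of "d mod k" "m ^ (d div k)"]) auto
qed

lemma round_up_measurable:
  assumes "m \<ge> 2" "k \<ge> 1" "Tm > 0" "t > 0"
  shows "(\<lambda>\<theta>. round_up m k \<theta> Tm t) \<in> borel_measurable borel"
  using assms by (simp add: round_up_eq_frac frac_def)

lemma finite_mult_set: "finite (mult_set a \<Delta>)"
  by (simp add: mult_set_def)

lemma mult_set_mult_subset:
  assumes "a > 0" "N > 0"
  shows "mult_set (real N * a) \<Delta> \<subseteq> mult_set a \<Delta>"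
proof
  fix x assume "x \<in> mult_set (real N * a) \<Delta>"
  then obtain j :: nat where j: "j \<le> nat \<lfloor>\<Delta> / (real N * a)\<rfloor>" and x: "x = real (j * N) * a"
    unfolding mult_set_def by auto
  have "j * N \<le> nat \<lfloor>\<Delta> / a\<rfloor>"
  proof (cases "j = 0")
    case False
    then have "real j \<le> \<Delta> / (real N * a)"
      using j by linarith
    then have "real (j * N) \<le> \<Delta> / a"
      using assms by (simp add: field_simps)
    then show ?thesis
      by linarith
  qed simp
  then show "x \<in> mult_set a \<Delta>"
    unfolding mult_set_def x by (auto intro!: image_eqI[where x = "j * N"])
qed

lemma card_mult_set_le:
  assumes "a > 0" "\<Delta> \<ge> 0"
  shows "real (card (mult_set a \<Delta>)) \<le> \<Delta> / a + 1"
proof -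
  have "card (mult_set a \<Delta>) \<le> card {0..nat \<lfloor>\<Delta> / a\<rfloor>}"
    unfolding mult_set_def by (rule card_image_le) simp
  then have "real (card (mult_set a \<Delta>)) \<le> real (nat \<lfloor>\<Delta> / a\<rfloor>) + 1"
    by simp
  also have "\<dots> \<le> \<Delta> / a + 1"
    using assms by simp
  finally show ?thesis .
qed

lemma Ncount_le_multiples:
  fixes b :: "'a \<Rightarrow> real"
  assumes "finite J" "\<And>j. j \<in> J \<Longrightarrow> b j > 0" "\<Delta> \<ge> 0"
    and "\<And>i. i < n \<Longrightarrow> \<exists>j\<in>J. \<exists>N>0. T i = real N * b j"
  shows "real (Ncount n T \<Delta>) \<le> (\<Sum>j\<in>J. \<Delta> / b j + 1)"
proof -
  have "(\<Union>i<n. mult_set (T i) \<Delta>) \<subseteq> (\<Union>j\<in>J. mult_set (b j) \<Delta>)"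
  proof (rule UN_least)
    fix i assume "i \<in> {..<n}"
    then obtain j N where "j \<in> J" "N > 0" "T i = real N * b j"
      using assms(4)[of i] by auto
    then have "mult_set (T i) \<Delta> \<subseteq> mult_set (b j) \<Delta>"
      using assms(2) by (simp add: mult_set_mult_subset)
    then show "mult_set (T i) \<Delta> \<subseteq> (\<Union>j\<in>J. mult_set (b j) \<Delta>)"
      using \<open>j \<in> J\<close> by blast
  qed
  then have "Ncount n T \<Delta> \<le> card (\<Union>j\<in>J. mult_set (b j) \<Delta>)"
    unfolding Ncount_def using assms(1) by (simp add: card_mono finite_mult_set)
  also have "\<dots> \<le> (\<Sum>j\<in>J. card (mult_set (b j) \<Delta>))"
    using assms(1) by (rule card_UN_le)
  finally have "real (Ncount n T \<Delta>) \<le> (\<Sum>j\<in>J. real (card (mult_set (b j) \<Delta>)))"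
    by (simp flip: of_nat_sum)
  also have "\<dots> \<le> (\<Sum>j\<in>J. \<Delta> / b j + 1)"
    using assms(2,3) by (intro sum_mono card_mult_set_le) auto
  finally show ?thesis .
qed

lemma Jcost_le_multiples:
  fixes b :: "'a \<Rightarrow> real"
  assumes "finite J" "\<And>j. j \<in> J \<Longrightarrow> b j > 0" "K0 \<ge> 0"
    and "\<And>i. i < n \<Longrightarrow> \<exists>j\<in>J. \<exists>N>0. T i = real N * b j"
  shows "Jcost n K0 T \<le> ereal (K0 * (\<Sum>j\<in>J. 1 / b j))"
proof -
  define S where "S = (\<Sum>j\<in>J. 1 / b j)"
  have "real (Ncount n T \<Delta>) / \<Delta> \<le> S + card J / \<Delta>" if "\<Delta> > 0" for \<Delta>
  proof -
    have "real (Ncount n T \<Delta>) \<le> (\<Sum>j\<in>J. \<Delta> / b j + 1)"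
      using that assms by (intro Ncount_le_multiples) auto
    also have "\<dots> = (S + card J / \<Delta>) * \<Delta>"
      using that by (simp add: S_def sum.distrib sum_distrib_left field_simps)
    finally show ?thesis
      by (simp only: pos_divide_le_eq[OF that])
  qed
  then have ev: "eventually (\<lambda>\<Delta>. ereal (real (Ncount n T \<Delta>) / \<Delta>) \<le> ereal (S + card J / \<Delta>)) at_top"
    by (auto intro: eventually_mono[OF eventually_gt_at_top[of 0]])
  have vanish: "((\<lambda>\<Delta>. card J / \<Delta>) \<longlongrightarrow> 0) at_top"
    by (rule tendsto_divide_0[OF tendsto_const
          filterlim_at_top_imp_at_infinity[OF filterlim_ident]])
  have lim: "((\<lambda>\<Delta>. ereal (S + card J / \<Delta>)) \<longlongrightarrow> ereal S) at_top"
    using tendsto_add[OF tendsto_const vanish, of S] by (intro tendsto_ereal) simp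
  have "Limsup at_top (\<lambda>\<Delta>. ereal (real (Ncount n T \<Delta>) / \<Delta>))
      \<le> Limsup at_top (\<lambda>\<Delta>. ereal (S + card J / \<Delta>))"
    by (rule Limsup_mono[OF ev])
  also have "\<dots> = ereal S"
    by (rule lim_imp_Limsup[OF trivial_limit_at_top_linorder lim])
  finally have "ereal K0 * Limsup at_top (\<lambda>\<Delta>. ereal (real (Ncount n T \<Delta>) / \<Delta>))
      \<le> ereal K0 * ereal S"
    by (rule ereal_mult_left_mono) (simp add: assms(3))
  then show ?thesis
    by (simp add: Jcost_def S_def)
qed

lemma Jcost_round_up_le:
  fixes \<theta> :: real
  assumes "m \<ge> 2" "k \<ge> 1" "Tm > 0" "\<theta> \<le> 1" "K0 \<ge> 0" "\<And>i. i < n \<Longrightarrow> Tm \<le> T i"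
  shows "Jcost n K0 (\<lambda>i. round_up m k \<theta> Tm (T i))
    \<le> ereal (K0 * (\<Sum>j<k. real m powr (- real j / k)) / Tm * real m powr (- \<theta> / k))"
proof -
  define r where "r = round_up m k \<theta> Tm Tm"
  define S where "S = (\<Sum>j<k. real m powr (- real j / k))"
  have r_ge: "Tm * real m powr (\<theta> / k) \<le> r"
    unfolding r_def using assms by (intro round_up_self_ge)
  moreover have "0 < Tm * real m powr (\<theta> / k)"
    using assms by simp
  ultimately have r_pos: "r > 0"
    by linarith
  have "Jcost n K0 (\<lambda>i. round_up m k \<theta> Tm (T i))
      \<le> ereal (K0 * (\<Sum>j<k. 1 / (real m powr (j / k) * r)))"
  proof (rule Jcost_le_multiples)
    fix i assume "i < n"
    then obtain j N :: nat where "j < k" "N > 0"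
      "round_up m k \<theta> Tm (T i) = real N * (real m powr (j / k) * r)"
      using round_up_multiple[OF assms(1-3) assms(6)[OF \<open>i < n\<close>]] unfolding r_def by blast
    then show "\<exists>j\<in>{..<k}. \<exists>N>0. round_up m k \<theta> Tm (T i) = real N * (real m powr (j / k) * r)"
      by auto
  qed (use assms r_pos in auto)
  also have "(\<Sum>j<k. 1 / (real m powr (j / k) * r)) = S / r"
    by (simp add: S_def sum_distrib_right powr_minus divide_inverse)
  also have "K0 * (S / r) \<le> K0 * S / (Tm * real m powr (\<theta> / k))"
  proof -
    have "0 \<le> K0 * S"
      unfolding S_def using assms(5) by (intro mult_nonneg_nonneg sum_nonneg) auto
    then show ?thesis
      using r_ge assms by (simp add: divide_left_mono r_pos)
  qed
  also have "\<dots> = K0 * S / Tm * real m powr (- \<theta> / k)"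
    by (simp add: powr_minus divide_inverse)
  finally show ?thesis
    by (simp add: S_def)
qed

lemma exp_has_integral:
  fixes L a b :: real
  assumes "L \<noteq> 0" "a \<le> b"
  shows "((\<lambda>x. exp (L * x)) has_integral (exp (L * b) - exp (L * a)) / L) {a..b}"
proof -
  have "((\<lambda>x. exp (L * x) / L) has_real_derivative exp (L * x)) (at x within {a..b})" for x
    using assms by (auto intro!: derivative_eq_intros)
  then show ?thesis
    using fundamental_theorem_of_calculus[OF assms(2), of "\<lambda>x. exp (L * x) / L"]
    by (simp add: has_real_derivative_iff_has_vector_derivative diff_divide_distrib)
qed

lemma powr_minus_has_integral:
  fixes x c :: real
  assumes "x > 1" "c > 0"
  shows "((\<lambda>\<theta>. x powr (- \<theta> / c)) has_integral (1 - x powr (- 1 / c)) / (ln x / c)) {0..1}"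
proof -
  define L where "L = - ln x / c"
  have "L \<noteq> 0"
    using assms by (simp add: L_def)
  have "x powr (- \<theta> / c) = exp (L * \<theta>)" for \<theta>
    using assms by (simp add: powr_def L_def)
  moreover have "(exp (L * 1) - exp (L * 0)) / L = (1 - x powr (- 1 / c)) / (ln x / c)"
  proof -
    have "exp L = x powr (- 1 / c)"
      using assms by (simp add: powr_def L_def)
    moreover have "ln x > 0"
      using assms by simp
    ultimately show ?thesis
      using assms by (simp add: L_def field_simps)
  qed
  ultimately show ?thesis
    using exp_has_integral[OF \<open>L \<noteq> 0\<close>, of 0 1] by (simp only:)
qed

lemma exp_one_minus_frac_has_integral:
  fixes L c :: real
  assumes "L \<noteq> 0"
  shows "((\<lambda>\<theta>. exp (L * (1 - frac (c - \<theta>)))) has_integral (exp L - 1) / L) {0..1}"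
proof -
  define f where "f = frac c"
  have f: "0 \<le> f" "f \<le> 1"
    unfolding f_def using frac_lt_1[of c] by auto
  let ?g = "\<lambda>\<theta>. exp (L * (1 - frac (c - \<theta>)))"
  have frac_left: "frac (c - \<theta>) = f - \<theta>" if "0 \<le> \<theta>" "\<theta> \<le> f" for \<theta>
  proof -
    have "\<lfloor>c - \<theta>\<rfloor> = \<lfloor>c\<rfloor>"
      using that unfolding f_def frac_def floor_eq_iff by linarith
    then show ?thesis
      by (simp add: frac_def f_def)
  qed
  have "?g \<theta> = exp (L * (1 - f)) * exp (L * \<theta>)" if "\<theta> \<in> {0..f}" for \<theta>
  proof -
    have "L * (1 - frac (c - \<theta>)) = L * (1 - f) + L * \<theta>"
      using that by (simp add: frac_left algebra_simps)
    then show ?thesis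
      by (simp add: exp_add)
  qed
  then have left: "(?g has_integral exp (L * (1 - f)) * ((exp (L * f) - exp (L * 0)) / L)) {0..f}"
    using assms f
    by (intro has_integral_spike_finite[where S = "{}", OF _ _
          has_integral_mult_right[OF exp_has_integral]]) auto
  have frac_right: "frac (c - \<theta>) = f - \<theta> + 1" if "f < \<theta>" "\<theta> \<le> 1" for \<theta>
  proof -
    have "\<lfloor>c - \<theta>\<rfloor> = \<lfloor>c\<rfloor> - 1"
      using that f unfolding f_def frac_def floor_eq_iff by linarith
    then show ?thesis
      by (simp add: frac_def f_def)
  qed
  have "?g \<theta> = exp (- L * f) * exp (L * \<theta>)" if "\<theta> \<in> {f..1} - {f}" for \<theta>
  proof -
    have "L * (1 - frac (c - \<theta>)) = - L * f + L * \<theta>"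
      using that by (simp add: frac_right algebra_simps)
    then show ?thesis
      by (simp only: exp_add)
  qed
  then have right: "(?g has_integral exp (- L * f) * ((exp (L * 1) - exp (L * f)) / L)) {f..1}"
    using assms f
    by (intro has_integral_spike_finite[where S = "{f}", OF _ _
          has_integral_mult_right[OF exp_has_integral]]) auto
  have "exp (L * (1 - f)) * ((exp (L * f) - exp (L * 0)) / L)
      + exp (- L * f) * ((exp (L * 1) - exp (L * f)) / L) = (exp L - 1) / L"
    using assms by (simp add: field_simps flip: exp_add)
  then show ?thesis
    using has_integral_combine[OF f left right] by simp
qed

lemma round_up_has_integral:
  assumes "m \<ge> 2" "k \<ge> 1" "Tm > 0" "t > 0"
  shows "((\<lambda>\<theta>. round_up m k \<theta> Tm t) has_integral t * (real m powr (1 / k) - 1) / (ln m / k)) {0..1}"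
proof -
  define L where "L = ln m / k"
  define c where "c = k * log m (t / Tm)"
  have "round_up m k \<theta> Tm t = t * exp (L * (1 - frac (c - \<theta>)))" for \<theta>
    using assms by (simp add: round_up_eq_frac powr_def L_def c_def)
  moreover have "exp L = real m powr (1 / k)" "L \<noteq> 0"
    using assms by (simp_all add: powr_def L_def)
  ultimately show ?thesis
    using has_integral_mult_right[OF exp_one_minus_frac_has_integral[of L c], of t]
    by (simp add: L_def ac_simps)
qed

lemma nn_integral_uniform_measure_Icc_has_integral:
  fixes g :: "real \<Rightarrow> real"
  assumes "g \<in> borel_measurable borel" "\<And>x. x \<in> {a..b} \<Longrightarrow> 0 \<le> g x"
    and "(g has_integral I) {a..b}" "a < b"
  shows "(\<integral>\<^sup>+x. ennreal (g x) \<partial>uniform_measure lborel {a..b}) = ennreal (I / (b - a))"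
proof -
  have "0 \<le> I"
    using assms(3,2) by (rule has_integral_nonneg)
  have "(\<integral>\<^sup>+x. ennreal (g x) \<partial>uniform_measure lborel {a..b})
      = (\<integral>\<^sup>+x. ennreal (g x) * indicator {a..b} x \<partial>lborel) / emeasure lborel {a..b}"
    using assms(1) by (intro nn_integral_uniform_measure) auto
  also have "\<dots> = ennreal I / ennreal (b - a)"
    using nn_integral_has_integral_lebesgue'[OF assms(2,3)] assms(4) by simp
  finally show ?thesis
    using \<open>0 \<le> I\<close> assms(4) by (simp add: divide_ennreal)
qed

lemma sum_powr_geometric:
  fixes x :: real
  assumes "x > 0" "k \<ge> 1"
  shows "(\<Sum>j<k. x powr (- real j / k)) * (1 - x powr (- 1 / k)) = 1 - 1 / x"
proof -
  define y where "y = x powr (- 1 / k)"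
  have "x powr (- real j / k) = y ^ j" for j
    using assms by (simp add: y_def powr_powr flip: powr_realpow)
  then have "(\<Sum>j<k. x powr (- real j / k)) * (1 - y) = 1 - y ^ k"
    using power_diff_1_eq[of y k] by (simp add: algebra_simps)
  also have "y ^ k = 1 / x"
  proof -
    have "y ^ k = y powr real k"
      using assms by (simp add: y_def powr_realpow)
    also have "\<dots> = x powr (- 1)"
      unfolding y_def powr_powr using assms by simp
    finally show ?thesis
      using assms by (simp add: powr_minus_divide)
  qed
  finally show ?thesis
    by (simp add: y_def)
qed

lemma Fcost_round_up_le:
  fixes T :: "nat \<Rightarrow> real"
  assumes "m \<ge> 2" "k \<ge> 1" "Tm > 0" "\<theta> \<le> 1" "K0 \<ge> 0"
    and "\<And>i. i < n \<Longrightarrow> K i \<ge> 0" "\<And>i. i < n \<Longrightarrow> Tm \<le> T i"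
  shows "Fcost n K0 K H (\<lambda>i. round_up m k \<theta> Tm (T i))
    \<le> ereal (K0 * (\<Sum>j<k. real m powr (- real j / k)) / Tm * real m powr (- \<theta> / k)
        + (\<Sum>i<n. K i / T i + H i * round_up m k \<theta> Tm (T i)))"
proof -
  have "K i / round_up m k \<theta> Tm (T i) \<le> K i / T i" if "i < n" for i
  proof -
    have "0 < T i"
      using assms(3) assms(7)[OF that] by linarith
    then show ?thesis
      using assms(1-3) assms(6)[OF that] round_up_gt[of m k Tm "T i" \<theta>] by (intro frac_le) auto
  qed
  then have "(\<Sum>i<n. K i / round_up m k \<theta> Tm (T i) + H i * round_up m k \<theta> Tm (T i))
      \<le> (\<Sum>i<n. K i / T i + H i * round_up m k \<theta> Tm (T i))"
    by (intro sum_mono) auto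
  with Jcost_round_up_le[OF assms(1-5,7)] show ?thesis
    unfolding Fcost_def plus_ereal.simps(1)[symmetric] by (intro add_mono) auto
qed

lemma cost_majorant_has_integral:
  fixes T :: "nat \<Rightarrow> real"
  assumes "m \<ge> 2" "k \<ge> 1" "Tm > 0" "\<And>i. i < n \<Longrightarrow> 0 < T i"
  shows "((\<lambda>\<theta>. K0 * (\<Sum>j<k. real m powr (- real j / k)) / Tm * real m powr (- \<theta> / k)
        + (\<Sum>i<n. K i / T i + H i * round_up m k \<theta> Tm (T i)))
      has_integral (1 - 1 / m) / (ln m / k) * (K0 / Tm)
        + (\<Sum>i<n. K i / T i + (real m powr (1 / k) - 1) / (ln m / k) * (H i * T i))) {0..1}"
proof -
  define S where "S = (\<Sum>j<k. real m powr (- real j / k))"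
  have geometric: "S * (1 - real m powr (- 1 / k)) = 1 - 1 / m"
    unfolding S_def using assms(1,2) by (intro sum_powr_geometric) auto
  have "K0 * S / Tm * ((1 - real m powr (- 1 / k)) / (ln m / k))
      = S * (1 - real m powr (- 1 / k)) / (ln m / k) * (K0 / Tm)"
    by (simp add: divide_inverse ac_simps)
  also have "\<dots> = (1 - 1 / m) / (ln m / k) * (K0 / Tm)"
    by (simp only: geometric)
  finally have joint_eq: "K0 * S / Tm * ((1 - real m powr (- 1 / k)) / (ln m / k))
      = (1 - 1 / m) / (ln m / k) * (K0 / Tm)" .
  have "((\<lambda>\<theta>. K0 * S / Tm * real m powr (- \<theta> / k)
        + (\<Sum>i<n. K i / T i + H i * round_up m k \<theta> Tm (T i)))
      has_integral K0 * S / Tm * ((1 - real m powr (- 1 / k)) / (ln m / k))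
        + (\<Sum>i<n. K i / T i + H i * (T i * (real m powr (1 / k) - 1) / (ln m / k)))) {0..1}"
  proof (intro has_integral_add has_integral_mult_right has_integral_sum powr_minus_has_integral)
    fix i assume "i \<in> {..<n}"
    then show "((\<lambda>\<theta>. round_up m k \<theta> Tm (T i))
        has_integral T i * (real m powr (1 / k) - 1) / (ln m / k)) {0..1}"
      using assms by (intro round_up_has_integral) auto
  next
    fix i show "((\<lambda>\<theta>. K i / T i) has_integral K i / T i) {0..1::real}"
      using has_integral_const_real[of "K i / T i" 0 1] by simp
  qed (use assms(1,2) in auto)
  then show ?thesis
    unfolding S_def[symmetric] by (rule has_integral_eq_rhs) (unfold joint_eq, simp add: ac_simps)
qed

lemma nn_integral_Fcost_round_up_le:
  fixes T :: "nat \<Rightarrow> real"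
  assumes "m \<ge> 2" "k \<ge> 1" "Tm > 0" "K0 \<ge> 0"
    and "\<And>i. i < n \<Longrightarrow> K i \<ge> 0" "\<And>i. i < n \<Longrightarrow> H i \<ge> 0" "\<And>i. i < n \<Longrightarrow> Tm \<le> T i"
  shows "(\<integral>\<^sup>+\<theta>. e2ennreal (Fcost n K0 K H (\<lambda>i. round_up m k \<theta> Tm (T i)))
      \<partial>uniform_measure lborel {0..1})
    \<le> ennreal ((1 - 1 / m) / (ln m / k) * (K0 / Tm)
        + (\<Sum>i<n. K i / T i + (real m powr (1 / k) - 1) / (ln m / k) * (H i * T i)))"
    (is "_ \<le> ennreal ?V")
proof -
  (* Integrate a majorant G instead of the cost itself, whose Limsup term is awkward to measure. *)
  define G where "G \<theta> = K0 * (\<Sum>j<k. real m powr (- real j / k)) / Tm * real m powr (- \<theta> / k)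
    + (\<Sum>i<n. K i / T i + H i * round_up m k \<theta> Tm (T i))" for \<theta>
  have T_pos: "0 < T i" if "i < n" for i
    using assms(3) assms(7)[OF that] by linarith
  have "0 < round_up m k \<theta> Tm (T i)" if "i < n" for \<theta> i
    using round_up_gt[OF assms(1-3) T_pos[OF that], of \<theta>] T_pos[OF that] by linarith
  then have G_nonneg: "0 \<le> G \<theta>" for \<theta>
    unfolding G_def using assms T_pos
    by (intro add_nonneg_nonneg sum_nonneg mult_nonneg_nonneg divide_nonneg_nonneg)
      (auto intro: less_imp_le)
  have "(\<lambda>\<theta>. round_up m k \<theta> Tm (T i)) \<in> borel_measurable borel" if "i < n" for i
    using assms(1-3) T_pos[OF that] by (rule round_up_measurable)
  then have G_meas: "G \<in> borel_measurable borel"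
    unfolding G_def by measurable
  have G_int: "(G has_integral ?V) {0..1}"
    unfolding G_def using assms(1-3) T_pos by (rule cost_majorant_has_integral)
  have "(\<integral>\<^sup>+\<theta>. e2ennreal (Fcost n K0 K H (\<lambda>i. round_up m k \<theta> Tm (T i)))
        \<partial>uniform_measure lborel {0..1})
      \<le> (\<integral>\<^sup>+\<theta>. ennreal (G \<theta>) \<partial>uniform_measure lborel {0..1})"
  proof (intro nn_integral_mono_AE AE_uniform_measureI AE_I2 impI)
    fix \<theta> :: real assume "\<theta> \<in> {0..1}"
    with assms have "Fcost n K0 K H (\<lambda>i. round_up m k \<theta> Tm (T i)) \<le> ereal (G \<theta>)"
      unfolding G_def by (intro Fcost_round_up_le) auto
    then show "e2ennreal (Fcost n K0 K H (\<lambda>i. round_up m k \<theta> Tm (T i))) \<le> ennreal (G \<theta>)"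
      using e2ennreal_mono by fastforce
  qed simp
  also have "\<dots> = ennreal ?V"
    using nn_integral_uniform_measure_Icc_has_integral[OF G_meas G_nonneg G_int] by simp
  finally show ?thesis .
qed

lemma resource_feasible_mono:
  assumes "resource_feasible n D \<alpha> T" "\<And>i d. i < n \<Longrightarrow> d < D \<Longrightarrow> \<alpha> i d \<ge> 0"
    and "\<And>i. i < n \<Longrightarrow> 0 < T i" "\<And>i. i < n \<Longrightarrow> T i \<le> T' i"
  shows "resource_feasible n D \<alpha> T'"
  unfolding resource_feasible_def
proof (intro allI impI)
  fix d assume "d < D"
  have "(\<Sum>i<n. \<alpha> i d / T' i) \<le> (\<Sum>i<n. \<alpha> i d / T i)"
    using assms(2-4) \<open>d < D\<close> by (intro sum_mono frac_le) auto
  also have "\<dots> \<le> 1"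
    using assms(1) \<open>d < D\<close> by (simp add: resource_feasible_def)
  finally show "(\<Sum>i<n. \<alpha> i d / T' i) \<le> 1" .
qed

lemma resource_feasible_round_up:
  assumes "m \<ge> 2" "k \<ge> 1" "Tm > 0" "resource_feasible n D \<alpha> T"
    and "\<And>i d. i < n \<Longrightarrow> d < D \<Longrightarrow> \<alpha> i d \<ge> 0" "\<And>i. i < n \<Longrightarrow> 0 < T i"
  shows "resource_feasible n D \<alpha> (\<lambda>i. round_up m k \<theta> Tm (T i))"
  using assms(4-6)
proof (rule resource_feasible_mono)
  show "T i \<le> round_up m k \<theta> Tm (T i)" if "i < n" for i
    using round_up_gt[OF assms(1-3) assms(6)[OF that]] by (rule less_imp_le)
qed

lemma OPT_P_eq_P_obj:
  assumes "P_optimal n D K0 K H \<alpha> Tmin T"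
  shows "OPT_P n D K0 K H \<alpha> = P_obj n K0 K H Tmin T"
  unfolding OPT_P_def using assms unfolding P_optimal_def by (intro cInf_eq_minimum) auto

lemma scaled_cost_le_P_obj:
  assumes "c\<^sub>J \<le> \<gamma>" "1 \<le> \<gamma>" "c\<^sub>H \<le> \<gamma>" "0 \<le> K0 / Tm"
    and "\<And>i. i < n \<Longrightarrow> 0 \<le> K i / T i" "\<And>i. i < n \<Longrightarrow> 0 \<le> H i * T i"
  shows "c\<^sub>J * (K0 / Tm) + (\<Sum>i<n. K i / T i + c\<^sub>H * (H i * T i)) \<le> \<gamma> * P_obj n K0 K H Tm T"
proof -
  have termwise: "K i / T i + c\<^sub>H * (H i * T i) \<le> \<gamma> * (K i / T i) + \<gamma> * (H i * T i)"
    if "i < n" for i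
    using mult_right_mono[OF assms(2) assms(5)[OF that]]
      mult_right_mono[OF assms(3) assms(6)[OF that]] by simp
  have "c\<^sub>J * (K0 / Tm) + (\<Sum>i<n. K i / T i + c\<^sub>H * (H i * T i))
      \<le> \<gamma> * (K0 / Tm) + (\<Sum>i<n. \<gamma> * (K i / T i) + \<gamma> * (H i * T i))"
    by (rule add_mono[OF mult_right_mono[OF assms(1,4)] sum_mono]) (use termwise in simp)
  also have "\<dots> = \<gamma> * P_obj n K0 K H Tm T"
    by (simp add: P_obj_def distrib_left sum_distrib_left sum.distrib)
  finally show ?thesis .
qed

lemma sqrt3_factor_ge_one: "1 \<le> 2 * (sqrt 3 - 1) / ln (3::real)"
proof -
  have "ln 3 = 2 * ln (sqrt (3::real))"
    by (simp add: ln_sqrt)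
  also have "\<dots> \<le> 2 * (sqrt 3 - 1)"
    by (intro mult_left_mono ln_le_minus_one) auto
  finally show ?thesis
    by simp
qed

lemma sqrt3_factor_ge_joint: "(1 - 1 / 3) / (ln 3 / 2) \<le> 2 * (sqrt 3 - 1) / ln (3::real)"
proof -
  have "5 / 3 \<le> sqrt (3::real)"
    by (rule real_le_rsqrt) (simp add: power2_eq_square)
  have "(1 - 1 / 3) / (ln 3 / 2) = (4 / 3) / ln (3::real)"
    by simp
  also have "\<dots> \<le> 2 * (sqrt 3 - 1) / ln 3"
    using \<open>5 / 3 \<le> sqrt 3\<close> by (intro divide_right_mono) auto
  finally show ?thesis .
qed

lemma sqrt3_factor_eq_holding: "(3 powr (1 / 2) - 1) / (ln 3 / 2) = 2 * (sqrt 3 - 1) / ln (3::real)"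
  by (simp add: powr_half_sqrt)

theorem lemma3p3:
  fixes n D :: nat and K0 :: real and K H :: "nat \<Rightarrow> real"
    and \<alpha> :: "nat \<Rightarrow> nat \<Rightarrow> real" and Tmin :: real and Tstar :: "nat \<Rightarrow> real"
  assumes "n \<ge> 1" and "D \<ge> 1" and "K0 > 0"
    and "\<And>i. i < n \<Longrightarrow> K i > 0" and "\<And>i. i < n \<Longrightarrow> H i > 0"
    and "\<And>i d. i < n \<Longrightarrow> d < D \<Longrightarrow> \<alpha> i d \<ge> 0"
    and opt: "P_optimal n D K0 K H \<alpha> Tmin Tstar"
  shows "(AE \<theta> in uniform_measure lborel {0..1::real}.
            resource_feasible n D \<alpha> (\<lambda>i. round_up 3 2 \<theta> Tmin (Tstar i)))
       \<and> (\<integral>\<^sup>+ \<theta>. e2ennreal (Fcost n K0 K H (\<lambda>i. round_up 3 2 \<theta> Tmin (Tstar i)))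
              \<partial>uniform_measure lborel {0..1::real})
         \<le> ennreal (2 * (sqrt 3 - 1) / ln 3 * OPT_P n D K0 K H \<alpha>)"
proof
  have Tmin_pos: "0 < Tmin" and Tstar_ge: "\<And>i. i < n \<Longrightarrow> Tmin \<le> Tstar i"
    and Tstar_feasible: "resource_feasible n D \<alpha> Tstar"
    using opt unfolding P_optimal_def P_feasible_def by auto
  then have Tstar_pos: "\<And>i. i < n \<Longrightarrow> 0 < Tstar i"
    by (meson less_le_trans)
  show "AE \<theta> in uniform_measure lborel {0..1}.
      resource_feasible n D \<alpha> (\<lambda>i. round_up 3 2 \<theta> Tmin (Tstar i))"
    using Tmin_pos Tstar_feasible assms(6) Tstar_pos by (simp add: resource_feasible_round_up)
  have "(\<integral>\<^sup>+ \<theta>. e2ennreal (Fcost n K0 K H (\<lambda>i. round_up 3 2 \<theta> Tmin (Tstar i)))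
        \<partial>uniform_measure lborel {0..1})
      \<le> ennreal ((1 - 1 / 3) / (ln 3 / 2) * (K0 / Tmin)
          + (\<Sum>i<n. K i / Tstar i + (3 powr (1 / 2) - 1) / (ln 3 / 2) * (H i * Tstar i)))"
    using assms(3-5) Tmin_pos Tstar_ge
    by (intro nn_integral_Fcost_round_up_le[where m = 3 and k = 2, unfolded of_nat_numeral])
      (auto simp: less_imp_le)
  also have "\<dots> \<le> ennreal (2 * (sqrt 3 - 1) / ln 3 * P_obj n K0 K H Tmin Tstar)"
    using assms(3-5) Tmin_pos Tstar_pos
    by (intro ennreal_leI scaled_cost_le_P_obj[OF sqrt3_factor_ge_joint sqrt3_factor_ge_one
          eq_refl[OF sqrt3_factor_eq_holding]]) (auto intro: less_imp_le)
  finally show "(\<integral>\<^sup>+ \<theta>. e2ennreal (Fcost n K0 K H (\<lambda>i. round_up 3 2 \<theta> Tmin (Tstar i)))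
      \<partial>uniform_measure lborel {0..1}) \<le> ennreal (2 * (sqrt 3 - 1) / ln 3 * OPT_P n D K0 K H \<alpha>)"
    by (simp only: OPT_P_eq_P_obj[OF opt])
qed

end
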